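(* Let $Q=[u_1,\dots,u_n]\subset\mathbb{S}^2$ be a spherical polygon and let $u_iu_{i+1}$ and $u_ju_{j+1}$ be two edges with $j\neq i+1$ and $i\neq j+1$. Then $Q$ has an antipodal intersection at these edges if and only if $$\operatorname{sign}[u_i,u_{i+1},u_j]=\operatorname{sign}[u_i,u_j,u_{j+1}]=-\operatorname{sign}[u_i,u_{i+1},u_{j+1}]=-\operatorname{sign}[u_{i+1},u_j,u_{j+1}].$$ Moreover this happens if and only if the set $\{u_i,u_{i+1},u_j,u_{j+1}\}$ is not contained in any closed hemisphere.
   Context: A spherical polygon has edges the minimal great-circle arcs between consecutive vertices (indices mod $n$). Standing assumption: no three vertices of $Q$ are linearly dependent. $[a,b,c]$ denotes the determinant of $a,b,c\in\mathbb{R}^3$. An antipodal intersection at edges $e,f$ means that $e$ intersects the antipodal arc $-f$. *)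

theory Defs
  imports "HOL-Analysis.Analysis"
begin

definition det3 :: "real^3 \<Rightarrow> real^3 \<Rightarrow> real^3 \<Rightarrow> real" where
  "det3 a b c = det (vector [a, b, c] :: real^3^3)"

text \<open>The minimal great-circle arc between two non-antipodal unit vectors:
  the radial projection of the chord onto the sphere.\<close>
definition sarc :: "real^3 \<Rightarrow> real^3 \<Rightarrow> (real^3) set" where
  "sarc a b = (\<lambda>x. x /\<^sub>R norm x) ` closed_segment a b"

definition spherical_polygon :: "nat \<Rightarrow> (nat \<Rightarrow> real^3) \<Rightarrow> bool" where
  "spherical_polygon n u \<longleftrightarrow>
     (\<forall>k<n. norm (u k) = 1) \<and>
     (\<forall>a<n. \<forall>b<n. \<forall>c<n. a \<noteq> b \<and> a \<noteq> c \<and> b \<noteq> c \<longrightarrow>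
        distinct [u a, u b, u c] \<and> independent {u a, u b, u c})"

definition edge :: "nat \<Rightarrow> (nat \<Rightarrow> real^3) \<Rightarrow> nat \<Rightarrow> (real^3) set" where
  "edge n u k = sarc (u k) (u ((k + 1) mod n))"

definition antipodal_intersection :: "nat \<Rightarrow> (nat \<Rightarrow> real^3) \<Rightarrow> nat \<Rightarrow> nat \<Rightarrow> bool" where
  "antipodal_intersection n u i j \<longleftrightarrow> edge n u i \<inter> uminus ` edge n u j \<noteq> {}"

definition in_closed_hemisphere :: "(real^3) set \<Rightarrow> bool" where
  "in_closed_hemisphere S \<longleftrightarrow> (\<exists>v. v \<noteq> 0 \<and> S \<subseteq> {x. v \<bullet> x \<ge> 0})"

end

theory Submission
  imports Defs "HOL-Analysis.Cross3"
begin

text \<open>Write \<open>a, b, c, d\<close> for \<open>u i, u i', u j, u j'\<close>. Any three of them are independent,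
  so the linear relations among the four vectors form a line, spanned by the Cramer relation
  \<open>[b,c,d] a - [a,c,d] b + [a,b,d] c - [a,b,c] d = 0\<close>. The two arcs meet antipodally iff some
  relation has nonnegative coefficients, not both zero on either arc; such a relation is then
  positive, which says exactly that the Cramer coefficients have the stated signs. A positive
  relation rules out a closed hemisphere, since a linear functional nonnegative on all four
  vectors would vanish on all of them. Conversely, if the sign pattern fails, one of the great
  circles through two of the vertices leaves the other two on the same side.\<close>

lemma det3_expand:
  "det3 a b c = a$1 * b$2 * c$3 - a$1 * b$3 * c$2 - a$2 * b$1 * c$3
              + a$2 * b$3 * c$1 + a$3 * b$1 * c$2 - a$3 * b$2 * c$1"
  unfolding det3_def by (simp add: det_3 vector_def algebra_simps)

lemma det3_swap12: "det3 b a c = - det3 a b c"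
  by (simp add: det3_expand algebra_simps)

lemma det3_rotate: "det3 b c a = det3 a b c"
  by (simp add: det3_expand algebra_simps)

lemma inner_cross3_eq_det3: "(cross3 y z) \<bullet> x = det3 x y z"
  by (simp add: det3_def dot_cross_det inner_commute)

lemma det3_nonzero_if_independent:
  assumes "distinct [a, b, c]" and "independent {a, b, c}"
  shows "det3 a b c \<noteq> 0"
proof
  let ?M = "vector [a, b, c] :: real^3^3"
  assume "det3 a b c = 0"
  then have "\<not> invertible ?M"
    by (simp add: det3_def invertible_det_nz)
  then obtain k i where "(\<Sum>i\<in>UNIV. k i *s row i ?M) = 0" and "k i \<noteq> 0"
    unfolding invertible_right_inverse matrix_right_invertible_independent_rows by blast
  then have "k 1 *\<^sub>R a + k 2 *\<^sub>R b + k 3 *\<^sub>R c = 0"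
    by (simp add: sum_3 row_def vector_def scalar_mult_eq_scaleR vec_lambda_eta)
  moreover define w where "w v = (if v = a then k 1 else if v = b then k 2 else k 3)" for v
  ultimately have "(\<Sum>v\<in>{a, b, c}. w v *\<^sub>R v) = 0" and "\<exists>v\<in>{a, b, c}. w v \<noteq> 0"
    using assms(1) \<open>k i \<noteq> 0\<close> exhaust_3[of i] by (auto simp: w_def add.assoc)
  then show False
    using assms(2) dependent_finite[of "{a, b, c}"] by auto
qed

lemma det3_cramer:
  "det3 b c d *\<^sub>R a - det3 a c d *\<^sub>R b + det3 a b d *\<^sub>R c - det3 a b c *\<^sub>R d = 0"
  by (simp add: vec_eq_iff forall_3 det3_expand algebra_simps)

lemma det3_relation:
  assumes "\<alpha> *\<^sub>R a + \<beta> *\<^sub>R b + \<gamma> *\<^sub>R c + \<delta> *\<^sub>R d = 0"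
  shows "\<alpha> * det3 a b c = - \<delta> * det3 b c d"
    and "\<beta> * det3 a b c = \<delta> * det3 a c d"
    and "\<gamma> * det3 a b c = - \<delta> * det3 a b d"
  using arg_cong[OF assms, of "det3 b c"] arg_cong[OF assms, of "det3 a c"]
    arg_cong[OF assms, of "det3 a b"]
  by (simp_all add: det3_expand algebra_simps)

lemma eq_0_if_orthogonal_det3_nonzero:
  assumes "det3 a b c \<noteq> 0" and "v \<bullet> a = 0" "v \<bullet> b = 0" "v \<bullet> c = 0"
  shows "v = 0"
proof -
  have "det3 a b c *\<^sub>R v
      = (v \<bullet> a) *\<^sub>R cross3 b c + (v \<bullet> b) *\<^sub>R cross3 c a + (v \<bullet> c) *\<^sub>R cross3 a b"
    by (simp add: cross3_simps det3_expand forall_3)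
  with assms show ?thesis by simp
qed

lemma sgn_eq_neg_sgn_iff:
  fixes p q :: "'a::real_normed_vector"
  shows "sgn p = - sgn q \<longleftrightarrow> (\<exists>r>0. \<exists>s>0. r *\<^sub>R p + s *\<^sub>R q = 0)"
proof
  assume sgn: "sgn p = - sgn q"
  show "\<exists>r>0. \<exists>s>0. r *\<^sub>R p + s *\<^sub>R q = 0"
  proof (cases "p = 0")
    case True
    with sgn have "q = 0" by (simp add: sgn_zero_iff)
    with \<open>p = 0\<close> show ?thesis by (auto intro!: exI[of _ 1])
  next
    case False
    with sgn have "q \<noteq> 0" by (auto simp: sgn_zero_iff)
    have norm_sgn: "norm x *\<^sub>R sgn x = x" for x :: 'a
      by (cases "x = 0") (simp_all add: sgn_div_norm)
    have "norm q *\<^sub>R p + norm p *\<^sub>R q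
        = norm q *\<^sub>R (norm p *\<^sub>R sgn p) + norm p *\<^sub>R (norm q *\<^sub>R sgn q)"
      by (simp only: norm_sgn)
    also have "\<dots> = (norm p * norm q) *\<^sub>R (sgn p + sgn q)"
      by (simp add: scaleR_add_right)
    finally have "norm q *\<^sub>R p + norm p *\<^sub>R q = 0"
      using sgn by simp
    with \<open>p \<noteq> 0\<close> \<open>q \<noteq> 0\<close> show ?thesis
      by (intro exI[of _ "norm q"] conjI exI[of _ "norm p"]) simp_all
  qed
next
  assume "\<exists>r>0. \<exists>s>0. r *\<^sub>R p + s *\<^sub>R q = 0"
  then obtain r s where "r > 0" "s > 0" and "r *\<^sub>R p + s *\<^sub>R q = 0" by blast
  then have "p = inverse r *\<^sub>R (r *\<^sub>R p)" and "r *\<^sub>R p = - (s *\<^sub>R q)"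
    by (simp_all add: eq_neg_iff_add_eq_0)
  then have "p = (- (s / r)) *\<^sub>R q"
    by (simp add: divide_inverse_commute)
  with \<open>r > 0\<close> \<open>s > 0\<close> show "sgn p = - sgn q"
    by (simp add: sgn_minus sgn_scaleR)
qed

lemma sarc_eq_sgn_image: "sarc a b = sgn ` closed_segment a b"
  by (simp add: sarc_def sgn_div_norm)

lemma sarc_inter_antipodal_iff:
  "sarc a b \<inter> uminus ` sarc c d \<noteq> {} \<longleftrightarrow>
     (\<exists>\<alpha> \<beta> \<gamma> \<delta>. 0 \<le> \<alpha> \<and> 0 \<le> \<beta> \<and> 0 \<le> \<gamma> \<and> 0 \<le> \<delta> \<and> 0 < \<alpha> + \<beta> \<and> 0 < \<gamma> + \<delta> \<and>
        \<alpha> *\<^sub>R a + \<beta> *\<^sub>R b + \<gamma> *\<^sub>R c + \<delta> *\<^sub>R d = 0)"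
  (is "_ \<longleftrightarrow> (\<exists>\<alpha> \<beta> \<gamma> \<delta>. ?rel \<alpha> \<beta> \<gamma> \<delta>)")
proof
  assume "sarc a b \<inter> uminus ` sarc c d \<noteq> {}"
  then obtain p q where "p \<in> closed_segment a b" "q \<in> closed_segment c d" "sgn p = - sgn q"
    by (auto simp: sarc_eq_sgn_image)
  then obtain u v u' v' r s
    where "0 \<le> u" "0 \<le> v" "u + v = 1" "p = u *\<^sub>R a + v *\<^sub>R b"
      and "0 \<le> u'" "0 \<le> v'" "u' + v' = 1" "q = u' *\<^sub>R c + v' *\<^sub>R d"
      and "0 < r" "0 < s" "r *\<^sub>R p + s *\<^sub>R q = 0"
    unfolding segment_convex_hull convex_hull_2 sgn_eq_neg_sgn_iff by blast
  then have "?rel (r * u) (r * v) (s * u') (s * v')"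
    by (simp add: scaleR_add_right add.assoc flip: distrib_left)
  then show "\<exists>\<alpha> \<beta> \<gamma> \<delta>. ?rel \<alpha> \<beta> \<gamma> \<delta>" by blast
next
  assume "\<exists>\<alpha> \<beta> \<gamma> \<delta>. ?rel \<alpha> \<beta> \<gamma> \<delta>"
  then obtain \<alpha> \<beta> \<gamma> \<delta> where rel: "?rel \<alpha> \<beta> \<gamma> \<delta>" by blast
  define p where "p = (\<alpha> / (\<alpha> + \<beta>)) *\<^sub>R a + (\<beta> / (\<alpha> + \<beta>)) *\<^sub>R b"
  define q where "q = (\<gamma> / (\<gamma> + \<delta>)) *\<^sub>R c + (\<delta> / (\<gamma> + \<delta>)) *\<^sub>R d"
  have "(\<alpha> + \<beta>) *\<^sub>R p + (\<gamma> + \<delta>) *\<^sub>R q = 0"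
    using rel by (simp add: p_def q_def scaleR_add_right add.assoc)
  then have "sgn p = - sgn q"
    using rel sgn_eq_neg_sgn_iff by blast
  moreover have "p \<in> closed_segment a b" "q \<in> closed_segment c d"
    unfolding segment_convex_hull convex_hull_2 p_def q_def using rel
    by (fastforce simp: add_divide_distrib[symmetric])+
  ultimately show "sarc a b \<inter> uminus ` sarc c d \<noteq> {}"
    by (auto simp: sarc_eq_sgn_image image_iff)
qed

definition positively_dependent4 :: "'a::real_vector \<Rightarrow> 'a \<Rightarrow> 'a \<Rightarrow> 'a \<Rightarrow> bool" where
  "positively_dependent4 a b c d \<longleftrightarrow>
     (\<exists>\<alpha> \<beta> \<gamma> \<delta>. 0 < \<alpha> \<and> 0 < \<beta> \<and> 0 < \<gamma> \<and> 0 < \<delta> \<and>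
        \<alpha> *\<^sub>R a + \<beta> *\<^sub>R b + \<gamma> *\<^sub>R c + \<delta> *\<^sub>R d = 0)"

lemma positively_dependent4_if_nonneg_relation:
  assumes "det3 a b c \<noteq> 0" "det3 a b d \<noteq> 0" "det3 a c d \<noteq> 0" "det3 b c d \<noteq> 0"
    and "0 \<le> \<alpha>" "0 \<le> \<beta>" "0 \<le> \<gamma>" "0 \<le> \<delta>" "0 < \<alpha> + \<beta>"
    and rel: "\<alpha> *\<^sub>R a + \<beta> *\<^sub>R b + \<gamma> *\<^sub>R c + \<delta> *\<^sub>R d = 0"
  shows "positively_dependent4 a b c d"
proof -
  note det_rel = det3_relation[OF rel]
  have "\<delta> \<noteq> 0"
  proof
    assume "\<delta> = 0"
    with det_rel(1,2) assms(1) have "\<alpha> = 0" "\<beta> = 0" by simp_all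
    with \<open>0 < \<alpha> + \<beta>\<close> show False by simp
  qed
  with det_rel assms(1-4) have "\<alpha> \<noteq> 0" "\<beta> \<noteq> 0" "\<gamma> \<noteq> 0"
    by auto
  with assms(5-8) \<open>\<delta> \<noteq> 0\<close> rel show ?thesis
    unfolding positively_dependent4_def by (intro exI[of _ \<alpha>] exI[of _ \<beta>] exI[of _ \<gamma>] exI[of _ \<delta>]) simp
qed

lemma sarc_inter_antipodal_iff_positively_dependent4:
  assumes "det3 a b c \<noteq> 0" "det3 a b d \<noteq> 0" "det3 a c d \<noteq> 0" "det3 b c d \<noteq> 0"
  shows "sarc a b \<inter> uminus ` sarc c d \<noteq> {} \<longleftrightarrow> positively_dependent4 a b c d"
proof
  assume "sarc a b \<inter> uminus ` sarc c d \<noteq> {}"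
  then show "positively_dependent4 a b c d"
    unfolding sarc_inter_antipodal_iff using positively_dependent4_if_nonneg_relation[OF assms]
    by blast
next
  assume "positively_dependent4 a b c d"
  then show "sarc a b \<inter> uminus ` sarc c d \<noteq> {}"
    unfolding sarc_inter_antipodal_iff positively_dependent4_def
    by (metis add_pos_pos less_imp_le)
qed

lemma positively_dependent4_iff_sgn_det3:
  assumes "det3 a b c \<noteq> 0"
  shows "positively_dependent4 a b c d \<longleftrightarrow>
    sgn (det3 a b c) = sgn (det3 a c d) \<and> sgn (det3 a c d) = - sgn (det3 a b d) \<and>
    - sgn (det3 a b d) = - sgn (det3 b c d)"
    (is "_ \<longleftrightarrow> ?signs")
proof
  assume "positively_dependent4 a b c d"
  then obtain \<alpha> \<beta> \<gamma> \<delta> where pos: "0 < \<alpha>" "0 < \<beta>" "0 < \<gamma>" "0 < \<delta>"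
    and rel: "\<alpha> *\<^sub>R a + \<beta> *\<^sub>R b + \<gamma> *\<^sub>R c + \<delta> *\<^sub>R d = 0"
    unfolding positively_dependent4_def by blast
  from det3_relation[OF rel] have
    "sgn \<alpha> * sgn (det3 a b c) = - (sgn \<delta> * sgn (det3 b c d))"
    "sgn \<beta> * sgn (det3 a b c) = sgn \<delta> * sgn (det3 a c d)"
    "sgn \<gamma> * sgn (det3 a b c) = - (sgn \<delta> * sgn (det3 a b d))"
    by (metis sgn_mult sgn_minus mult_minus_left)+
  with pos show ?signs by simp
next
  assume ?signs
  let ?\<sigma> = "sgn (det3 a b c)"
  have "\<bar>det3 b c d\<bar> *\<^sub>R a + \<bar>det3 a c d\<bar> *\<^sub>R b + \<bar>det3 a b d\<bar> *\<^sub>R c + \<bar>det3 a b c\<bar> *\<^sub>R d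
      = (- ?\<sigma>) *\<^sub>R (det3 b c d *\<^sub>R a - det3 a c d *\<^sub>R b + det3 a b d *\<^sub>R c - det3 a b c *\<^sub>R d)"
    using \<open>?signs\<close> by (simp add: abs_sgn algebra_simps)
  also have "\<dots> = 0"
    by (simp add: det3_cramer)
  finally show "positively_dependent4 a b c d"
    using assms \<open>?signs\<close> unfolding positively_dependent4_def
    by (metis sgn_0 sgn_zero_iff neg_equal_0_iff_equal zero_less_abs_iff)
qed

lemma not_in_closed_hemisphere_if_positively_dependent4:
  assumes "det3 a b c \<noteq> 0" and "positively_dependent4 a b c d"
  shows "\<not> in_closed_hemisphere {a, b, c, d}"
proof
  assume "in_closed_hemisphere {a, b, c, d}"
  then obtain v where "v \<noteq> 0" and v: "0 \<le> v \<bullet> a" "0 \<le> v \<bullet> b" "0 \<le> v \<bullet> c" "0 \<le> v \<bullet> d"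
    unfolding in_closed_hemisphere_def by auto
  obtain \<alpha> \<beta> \<gamma> \<delta> where pos: "0 < \<alpha>" "0 < \<beta>" "0 < \<gamma>" "0 < \<delta>"
    and rel: "\<alpha> *\<^sub>R a + \<beta> *\<^sub>R b + \<gamma> *\<^sub>R c + \<delta> *\<^sub>R d = 0"
    using assms(2) unfolding positively_dependent4_def by blast
  have "\<alpha> * (v \<bullet> a) + \<beta> * (v \<bullet> b) + \<gamma> * (v \<bullet> c) + \<delta> * (v \<bullet> d) = 0"
    using arg_cong[OF rel, of "inner v"] by (simp add: inner_add_right)
  moreover have "0 \<le> \<alpha> * (v \<bullet> a)" "0 \<le> \<beta> * (v \<bullet> b)" "0 \<le> \<gamma> * (v \<bullet> c)" "0 \<le> \<delta> * (v \<bullet> d)"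
    using pos v by simp_all
  ultimately have "\<alpha> * (v \<bullet> a) = 0" "\<beta> * (v \<bullet> b) = 0" "\<gamma> * (v \<bullet> c) = 0"
    by linarith+
  with pos have "v = 0"
    by (intro eq_0_if_orthogonal_det3_nonzero[OF assms(1)]) simp_all
  with \<open>v \<noteq> 0\<close> show False ..
qed

lemma in_closed_hemisphere_if_same_side:
  assumes "0 < det3 z x y * det3 w x y"
  shows "in_closed_hemisphere {x, y, z, w}"
proof -
  define v where "v = det3 z x y *\<^sub>R cross3 x y"
  have "0 < det3 z x y * det3 z x y"
    using assms by (metis mult_zero_left not_real_square_gt_zero)
  then have "0 < v \<bullet> z" "0 < v \<bullet> w"
    using assms by (simp_all add: v_def inner_cross3_eq_det3)
  moreover have "v \<bullet> x = 0" "v \<bullet> y = 0"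
    by (simp_all add: v_def dot_cross_self)
  ultimately have "v \<noteq> 0" and "{x, y, z, w} \<subseteq> {p. 0 \<le> v \<bullet> p}"
    by auto
  then show ?thesis
    unfolding in_closed_hemisphere_def by blast
qed

lemma real_sgn_eq_iff_mult:
  fixes x y :: real
  assumes "x \<noteq> 0" "y \<noteq> 0"
  shows "sgn x = sgn y \<longleftrightarrow> 0 < x * y"
    and "sgn x = - sgn y \<longleftrightarrow> x * y < 0"
  using assms by (auto simp: sgn_if zero_less_mult_iff mult_less_0_iff)

lemma in_closed_hemisphere_if_not_positively_dependent4:
  assumes "det3 a b c \<noteq> 0" "det3 a b d \<noteq> 0" "det3 a c d \<noteq> 0" "det3 b c d \<noteq> 0"
    and "\<not> positively_dependent4 a b c d"
  shows "in_closed_hemisphere {a, b, c, d}"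
proof -
  have "\<not> (0 < det3 a b c * det3 a c d \<and> det3 a c d * det3 a b d < 0 \<and> 0 < det3 a b d * det3 b c d)"
    using assms positively_dependent4_iff_sgn_det3[OF assms(1)] by (simp add: real_sgn_eq_iff_mult)
  moreover have "det3 a b c * det3 a c d \<noteq> 0" "det3 a c d * det3 a b d \<noteq> 0"
    "det3 a b d * det3 b c d \<noteq> 0"
    using assms(1-4) by simp_all
  ultimately have
    "det3 a b c * det3 a c d < 0 \<or> 0 < det3 a c d * det3 a b d \<or> det3 a b d * det3 b c d < 0"
    by linarith
  then consider
    "det3 a b c * det3 a c d < 0" | "0 < det3 a c d * det3 a b d" | "det3 a b d * det3 b c d < 0"
    by blast
  then show ?thesis
  proof cases
    case 1
    have "det3 b a c * det3 d a c = - (det3 a b c * det3 a c d)"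
      unfolding det3_swap12[of a b c] det3_rotate[of c d a] det3_rotate[of a c d] by simp
    with 1 in_closed_hemisphere_if_same_side[of b a c d] show ?thesis
      by (simp add: insert_commute)
  next
    case 2
    have "det3 b a d * det3 c a d = det3 a c d * det3 a b d"
      unfolding det3_swap12[of a b d] det3_swap12[of a c d] by simp
    with 2 in_closed_hemisphere_if_same_side[of b a d c] show ?thesis
      by (simp add: insert_commute)
  next
    case 3
    have "det3 a b d * det3 c b d = - (det3 a b d * det3 b c d)"
      unfolding det3_swap12[of b c d] by simp
    with 3 in_closed_hemisphere_if_same_side[of a b d c] show ?thesis
      by (simp add: insert_commute)
  qed
qed

lemma spherical_polygon_det3_nonzero:
  assumes "spherical_polygon n u" and "a < n" "b < n" "c < n" and "a \<noteq> b" "a \<noteq> c" "b \<noteq> c"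
  shows "det3 (u a) (u b) (u c) \<noteq> 0"
proof -
  from assms have "distinct [u a, u b, u c] \<and> independent {u a, u b, u c}"
    unfolding spherical_polygon_def by blast
  then show ?thesis
    using det3_nonzero_if_independent by blast
qed

theorem proposition3:
  fixes n :: nat and u :: "nat \<Rightarrow> real^3" and i j :: nat
  assumes "spherical_polygon n u"
    and "i < n" and "j < n" and "i \<noteq> j"
    and "j \<noteq> (i + 1) mod n" and "i \<noteq> (j + 1) mod n"
  defines "i' \<equiv> (i + 1) mod n" and "j' \<equiv> (j + 1) mod n"
  shows "(antipodal_intersection n u i j \<longleftrightarrow>
            (sgn (det3 (u i) (u i') (u j)) = sgn (det3 (u i) (u j) (u j')) \<and>
             sgn (det3 (u i) (u j) (u j')) = - sgn (det3 (u i) (u i') (u j')) \<and>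
             - sgn (det3 (u i) (u i') (u j')) = - sgn (det3 (u i') (u j) (u j'))))
       \<and> (antipodal_intersection n u i j \<longleftrightarrow>
            \<not> in_closed_hemisphere {u i, u i', u j, u j'})"
proof -
  have indices: "i' < n" "j' < n" "i \<noteq> i'" "j \<noteq> j'" "i' \<noteq> j'"
    using assms(2-4) unfolding i'_def j'_def by (auto simp: mod_Suc)
  have nz: "det3 (u i) (u i') (u j) \<noteq> 0" "det3 (u i) (u i') (u j') \<noteq> 0"
    "det3 (u i) (u j) (u j') \<noteq> 0" "det3 (u i') (u j) (u j') \<noteq> 0"
    using spherical_polygon_det3_nonzero[OF assms(1)] assms(2-6) indices
    unfolding i'_def j'_def by auto
  have "antipodal_intersection n u i j \<longleftrightarrow> positively_dependent4 (u i) (u i') (u j) (u j')"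
    unfolding antipodal_intersection_def edge_def i'_def [symmetric] j'_def [symmetric]
    by (rule sarc_inter_antipodal_iff_positively_dependent4[OF nz])
  then show ?thesis
    using positively_dependent4_iff_sgn_det3[OF nz(1)]
      not_in_closed_hemisphere_if_positively_dependent4[OF nz(1)]
      in_closed_hemisphere_if_not_positively_dependent4[OF nz]
    by blast
qed

end
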